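(* For $t\in\mathbb C$ let $f_t(z)=\sqrt{z^2-z+t}$ (principal branch, holomorphic near $z=0$ when $t\notin(-\infty,0]$) and let $f_t(z)=\sum_{n\ge0}\hat f_n(t)z^n$ be its Taylor expansion at $0$. Fix $0<r<1/4$ and $M>0$. Then there exists $N=N(r,M)$ such that $$\max_{1\le n\le N}|\hat f_n(t)|>M$$ for all $t\in\mathbb C$ with $|t-1/4|=r$.
   Context: $\sqrt{\cdot}$ denotes the principal branch: $\sqrt z=|z|^{1/2}e^{i(\arg z)/2}$ with $\arg z\in(-\pi,\pi]$. Note that for $|t-1/4|=r<1/4$ one has $\operatorname{Re}t>0$, so $f_t$ is holomorphic near $0$. *)

theory Defs
  imports "HOL-Analysis.Analysis"
begin

definition sqrt_quad :: "complex \<Rightarrow> complex \<Rightarrow> complex" where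
  "sqrt_quad t z = csqrt (z^2 - z + t)"

definition taylor_coeff :: "nat \<Rightarrow> complex \<Rightarrow> complex" where
  "taylor_coeff n t = (deriv ^^ n) (sqrt_quad t) 0 / of_nat (fact n)"

end

theory Submission
  imports Defs "HOL-Complex_Analysis.Complex_Analysis"
begin

text \<open>Squaring the Taylor series shows that its coefficients \<open>a n\<close> satisfy
  \<open>(\<Sum>i\<le>m. a i * a (m - i)) = quad_coeff t m\<close>, the coefficients of \<open>z\<^sup>2 - z + t\<close>.
  If \<open>|a n| \<le> M\<close> for all \<open>n \<le> N\<close>, the truncation \<open>P\<close> of the series at degree \<open>N\<close> is
  \<open>M/(1-\<rho>)\<^sup>2\<close>-Lipschitz on the disc \<open>|z| \<le> \<rho> < 1\<close>, and there
  \<open>|P z\<^sup>2 - (z\<^sup>2 - z + t)| \<le> (N+1)\<^sup>2 M\<^sup>2 \<rho>\<^sup>N\<^sup>+\<^sup>1\<close>. A root \<open>\<zeta>\<close> of \<open>z\<^sup>2 - z + t\<close> has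
  \<open>|2\<zeta> - 1| = 2 sqrt r\<close>, so it lies in such a disc; then \<open>P \<zeta>\<close> is tiny while
  \<open>|P (\<zeta> + \<eta>)|\<^sup>2\<close> is about \<open>2 sqrt r \<eta>\<close>, which contradicts the Lipschitz bound for
  small \<open>\<eta>\<close> once \<open>N\<close> is large.\<close>

section \<open>Squares of truncated power series\<close>

definition quad_coeff :: "complex \<Rightarrow> nat \<Rightarrow> complex" where
  "quad_coeff t m = (if m = 0 then t else if m = 1 then -1 else if m = 2 then 1 else 0)"

lemma sum_quad_coeff:
  assumes "N \<ge> 2"
  shows "(\<Sum>k\<le>N. quad_coeff t k * z^k) = z^2 - z + t"
  using assms
proof (induction N rule: dec_induct)
  case base
  show ?case by (simp add: quad_coeff_def numeral_2_eq_2)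
next
  case (step n)
  then show ?case by (simp add: quad_coeff_def)
qed

definition square_tail :: "(nat \<Rightarrow> 'a::comm_semiring_1) \<Rightarrow> nat \<Rightarrow> 'a \<Rightarrow> 'a" where
  "square_tail a N z = (\<Sum>(i,j)\<in>({..N}\<times>{..N}) - {(i,j). i+j \<le> N}. a i * a j * z^(i+j))"

lemma truncated_series_square:
  fixes a :: "nat \<Rightarrow> 'a::comm_semiring_1"
  shows "(\<Sum>n\<le>N. a n * z^n)^2 = (\<Sum>k\<le>N. (\<Sum>i\<le>k. a i * a (k-i)) * z^k) + square_tail a N z"
proof -
  let ?g = "\<lambda>(i,j). a i * a j * z^(i+j)"
  have "(\<Sum>n\<le>N. a n * z^n)^2 = sum ?g ({..N}\<times>{..N})"
    by (simp add: power2_eq_square sum_product power_add sum.cartesian_product algebra_simps)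
  also have "\<dots> = sum ?g {(i,j). i+j \<le> N} + square_tail a N z"
    unfolding square_tail_def by (subst add.commute, rule sum.subset_diff) auto
  also have "sum ?g {(i,j). i+j \<le> N} = (\<Sum>k\<le>N. \<Sum>i\<le>k. a i * a (k-i) * z^(i + (k-i)))"
    by (rule sum.triangle_reindex_eq)
  also have "\<dots> = (\<Sum>k\<le>N. (\<Sum>i\<le>k. a i * a (k-i)) * z^k)"
    by (auto simp: sum_distrib_right intro!: sum.cong)
  finally show ?thesis .
qed

lemma norm_square_tail_le:
  fixes a :: "nat \<Rightarrow> 'a::real_normed_field"
  assumes bnd: "\<And>n. n \<le> N \<Longrightarrow> norm (a n) \<le> M" and z: "norm z \<le> R" and "R \<le> 1"
  shows "norm (square_tail a N z) \<le> (real N + 1)^2 * M^2 * R^(N+1)"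
proof -
  let ?B = "({..N}\<times>{..N}) - {(i,j). i+j \<le> N}"
  have R: "0 \<le> R" using z norm_ge_zero order_trans by blast
  have M: "0 \<le> M" using bnd[of 0] norm_ge_zero order_trans by blast
  have "norm (square_tail a N z) \<le> (\<Sum>(i,j)\<in>?B. norm (a i * a j * z^(i+j)))"
    unfolding square_tail_def by (rule norm_sum[THEN order_trans]) (simp add: case_prod_unfold)
  also have "\<dots> \<le> (\<Sum>(i,j)\<in>?B. M^2 * R^(N+1))"
  proof (rule sum_mono)
    fix p assume "p \<in> ?B"
    then obtain i j where ij: "p = (i,j)" "i \<le> N" "j \<le> N" "N < i + j" by auto
    have "norm (a i * a j * z^(i+j)) = norm (a i) * norm (a j) * norm z ^ (i+j)"
      by (simp add: norm_mult norm_power)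
    also have "\<dots> \<le> M * M * R^(i+j)"
      by (intro mult_mono bnd ij power_mono z) (auto simp: M)
    also have "\<dots> \<le> M * M * R^(N+1)"
      using ij R \<open>R \<le> 1\<close> M by (intro mult_left_mono power_decreasing) auto
    finally show "(\<lambda>(i,j). norm (a i * a j * z^(i+j))) p \<le> (\<lambda>(i,j). M^2 * R^(N+1)) p"
      by (simp add: ij power2_eq_square)
  qed
  also have "\<dots> = real (card ?B) * (M^2 * R^(N+1))" by (simp add: case_prod_unfold)
  also have "\<dots> \<le> real (card ({..N}\<times>{..N})) * (M^2 * R^(N+1))"
    using R by (intro mult_right_mono of_nat_mono card_mono) auto
  finally show ?thesis by (simp add: card_cartesian_product power2_eq_square algebra_simps)
qed

lemma norm_power_diff_le:
  fixes z w :: "'a::real_normed_field"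
  assumes "norm z \<le> R" "norm w \<le> R"
  shows "norm (z^n - w^n) \<le> real n * R^(n-1) * norm (z - w)"
proof (induction n)
  case 0 then show ?case by simp
next
  case (Suc n)
  have R: "0 \<le> R" using assms(1) norm_ge_zero order_trans by blast
  have "z^Suc n - w^Suc n = z * (z^n - w^n) + (z - w) * w^n" by (simp add: algebra_simps)
  hence "norm (z^Suc n - w^Suc n) \<le> norm z * norm (z^n - w^n) + norm (z - w) * norm w ^ n"
    by (metis norm_mult norm_power norm_triangle_ineq)
  also have "\<dots> \<le> R * (real n * R^(n-1) * norm (z - w)) + norm (z - w) * R^n"
    by (intro add_mono mult_mono Suc power_mono assms) (auto simp: R)
  also have "\<dots> = real (Suc n) * R^n * norm (z - w)"
    by (cases n) (auto simp: algebra_simps)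
  finally show ?case by simp
qed

lemma sum_geometric_deriv_le:
  fixes R :: real assumes "0 \<le> R" "R < 1"
  shows "(\<Sum>n\<le>N. real n * R^(n-1)) \<le> 1 / (1 - R)^2"
proof -
  have sums: "(\<lambda>n. real (Suc n) * R^n) sums (1 / (1 - R)^2)"
    using geometric_deriv_sums[of R] assms by simp
  have "(\<Sum>n\<le>N. real n * R^(n-1)) = (\<Sum>n<N. real (Suc n) * R^n)"
    by (simp add: sum.atMost_shift)
  also have "\<dots> \<le> 1 / (1 - R)^2"
    using sum_le_suminf[OF sums_summable[OF sums], of "{..<N}"] sums_unique[OF sums] assms by simp
  finally show ?thesis .
qed

lemma truncated_series_lipschitz:
  fixes a :: "nat \<Rightarrow> 'a::real_normed_field"
  assumes bnd: "\<And>n. n \<le> N \<Longrightarrow> norm (a n) \<le> M"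
    and "norm z \<le> R" "norm w \<le> R" "R < 1"
  shows "norm ((\<Sum>n\<le>N. a n * z^n) - (\<Sum>n\<le>N. a n * w^n)) \<le> M / (1 - R)^2 * norm (z - w)"
proof -
  have R: "0 \<le> R" using assms(2) norm_ge_zero order_trans by blast
  have M: "0 \<le> M" using bnd[of 0] norm_ge_zero order_trans by blast
  have "norm ((\<Sum>n\<le>N. a n * z^n) - (\<Sum>n\<le>N. a n * w^n)) = norm (\<Sum>n\<le>N. a n * (z^n - w^n))"
    by (simp add: sum_subtractf algebra_simps)
  also have "\<dots> \<le> (\<Sum>n\<le>N. norm (a n) * norm (z^n - w^n))"
    by (rule norm_sum[THEN order_trans]) (simp add: sum_mono norm_mult_ineq)
  also have "\<dots> \<le> (\<Sum>n\<le>N. M * (real n * R^(n-1) * norm (z - w)))"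
    by (intro sum_mono mult_mono bnd norm_power_diff_le assms) (auto simp: M)
  also have "\<dots> = M * norm (z - w) * (\<Sum>n\<le>N. real n * R^(n-1))"
    by (simp add: sum_distrib_left algebra_simps)
  also have "\<dots> \<le> M * norm (z - w) * (1 / (1 - R)^2)"
    by (intro mult_left_mono sum_geometric_deriv_le) (use assms R M in auto)
  finally show ?thesis by simp
qed

lemma norm_truncated_sqrt_square_diff_le:
  fixes a :: "nat \<Rightarrow> complex" and w t :: complex and N :: nat
  assumes conv: "\<And>m. (\<Sum>i\<le>m. a i * a (m-i)) = quad_coeff t m" and "N \<ge> 2"
    and "\<And>n. n \<le> N \<Longrightarrow> cmod (a n) \<le> M" and "cmod w \<le> R" "R \<le> 1"
  shows "cmod ((\<Sum>n\<le>N. a n * w^n)^2 - (w^2 - w + t)) \<le> (real N + 1)^2 * M^2 * R^(N+1)"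
proof -
  have "(\<Sum>n\<le>N. a n * w^n)^2 - (w^2 - w + t) = square_tail a N w"
    using truncated_series_square[where a=a and N=N and z=w] sum_quad_coeff[OF \<open>N \<ge> 2\<close>] by (simp add: conv)
  then show ?thesis using norm_square_tail_le[of N a M w R] assms(3-5) by simp
qed

lemma tendsto_square_times_power_zero:
  fixes x :: real assumes "0 \<le> x" "x < 1"
  shows "(\<lambda>n. (real n + 1)^2 * x^(n+1)) \<longlonglongrightarrow> 0"
proof -
  have sqrt_pow: "(sqrt x ^ k)^2 = x^k" for k
    using assms by (simp flip: power_mult add: mult.commute[of k] power_mult)
  have "(\<lambda>n. of_nat n * sqrt x ^ n) \<longlonglongrightarrow> 0"
    by (rule powser_times_n_limit_0) (use assms in simp)
  then have "(\<lambda>n. of_nat (Suc n) * sqrt x ^ Suc n) \<longlonglongrightarrow> 0"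
    by (rule LIMSEQ_Suc)
  then have "(\<lambda>n. (of_nat (Suc n) * sqrt x ^ Suc n)^2) \<longlonglongrightarrow> 0^2"
    by (rule tendsto_power)
  then show ?thesis
    unfolding power_mult_distrib sqrt_pow by (simp add: add.commute)
qed

section \<open>Approximate square roots of a quadratic\<close>

lemma quadratic_root_near_half:
  obtains \<zeta> :: complex where "\<zeta>^2 - \<zeta> + t = 0" "cmod (2*\<zeta> - 1) = 2 * sqrt (cmod (t - 1/4))"
proof
  let ?\<zeta> = "(1 + csqrt (1 - 4*t)) / 2"
  have "?\<zeta>^2 - ?\<zeta> + t = ((csqrt (1 - 4*t))^2 - (1 - 4*t)) / 4"
    by (simp add: power2_eq_square field_simps)
  then show "?\<zeta>^2 - ?\<zeta> + t = 0" by simp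
  have "cmod (1 - 4*t) = 4 * cmod (t - 1/4)"
    using norm_mult[of 4 "t - 1/4"] by (simp add: algebra_simps norm_minus_commute)
  moreover have "2 * ?\<zeta> - 1 = csqrt (1 - 4*t)" by (simp add: add_divide_distrib)
  ultimately show "cmod (2 * ?\<zeta> - 1) = 2 * sqrt (cmod (t - 1/4))"
    by (simp add: real_sqrt_mult)
qed

lemma approximate_sqrt_slope_bound:
  fixes P :: "complex \<Rightarrow> complex" and \<zeta> d :: complex and \<eta> L \<epsilon> :: real
  assumes "\<eta> \<ge> 0"
    and at_root: "cmod (P \<zeta> ^ 2) < \<epsilon>"
    and near_root: "cmod (P (\<zeta> + \<eta>) ^ 2 - (d * \<eta> + \<eta>^2)) < \<epsilon>"
    and lip: "cmod (P (\<zeta> + \<eta>) - P \<zeta>) \<le> L * \<eta>"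
  shows "cmod d * \<eta> < 3*\<epsilon> + (2*L^2 + 1) * \<eta>^2"
proof -
  define p where "p = cmod (P \<zeta>)"
  define u where "u = cmod (P (\<zeta> + \<eta>))"
  have p: "p^2 < \<epsilon>" "0 \<le> p" using at_root by (auto simp: p_def norm_power)
  have u: "u \<le> p + L * \<eta>" "0 \<le> u"
    using lip norm_triangle_ineq2[of "P (\<zeta> + \<eta>)" "P \<zeta>"] by (auto simp: u_def p_def)
  have "cmod d * \<eta> - \<eta>^2 \<le> cmod (d * \<eta> + \<eta>^2)"
    using norm_diff_ineq[of "d * \<eta>" "\<eta>^2"] \<open>\<eta> \<ge> 0\<close> by (simp add: norm_mult norm_power)
  also have "\<dots> < u^2 + \<epsilon>"
    using near_root norm_triangle_ineq2[of "d * \<eta> + \<eta>^2" "P (\<zeta> + \<eta>) ^ 2"]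
    by (simp add: u_def norm_power norm_minus_commute)
  finally have lower: "cmod d * \<eta> - \<eta>^2 < u^2 + \<epsilon>" .
  have "u^2 \<le> (p + L*\<eta>)^2" using u by (intro power_mono) auto
  also have "\<dots> \<le> 2*p^2 + 2*(L*\<eta>)^2"
    using zero_le_power2[of "p - L*\<eta>"] unfolding power2_diff power2_sum by linarith
  finally have upper: "u^2 \<le> 2*p^2 + 2*(L*\<eta>)^2" .
  have "cmod d * \<eta> < 3*\<epsilon> + (2*(L*\<eta>)^2 + \<eta>^2)"
    using lower upper p by linarith
  also have "2*(L*\<eta>)^2 + \<eta>^2 = (2*L^2 + 1) * \<eta>^2"
    by (simp add: power_mult_distrib algebra_simps)
  finally show ?thesis .
qed

lemma truncated_sqrt_slope_bound:
  fixes a :: "nat \<Rightarrow> complex" and \<eta> \<epsilon> \<rho> M :: real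
  assumes conv: "\<And>m. (\<Sum>i\<le>m. a i * a (m-i)) = quad_coeff t m" and "N \<ge> 2"
    and bnd: "\<And>n. n \<le> N \<Longrightarrow> cmod (a n) \<le> M"
    and tail: "(real N + 1)^2 * M^2 * \<rho>^(N+1) < \<epsilon>"
    and root: "\<zeta>^2 - \<zeta> + t = 0" and "\<eta> \<ge> 0" and "cmod \<zeta> + \<eta> \<le> \<rho>" and "\<rho> < 1"
  shows "cmod (2*\<zeta> - 1) * \<eta> < 3*\<epsilon> + (2*(M / (1 - \<rho>)^2)^2 + 1) * \<eta>^2"
proof -
  have "cmod (\<zeta> + \<eta>) \<le> cmod \<zeta> + \<eta>"
    using norm_triangle_ineq[of \<zeta> "of_real \<eta>"] \<open>\<eta> \<ge> 0\<close> by simp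
  then have \<zeta>: "cmod \<zeta> \<le> \<rho>" "cmod (\<zeta> + \<eta>) \<le> \<rho>"
    using assms(6,7) by linarith+
  define P where "P w = (\<Sum>n\<le>N. a n * w^n)" for w
  have approx: "cmod (P w ^ 2 - (w^2 - w + t)) < \<epsilon>" if "cmod w \<le> \<rho>" for w
    using norm_truncated_sqrt_square_diff_le[OF conv \<open>N \<ge> 2\<close> bnd that] \<open>\<rho> < 1\<close> tail
    unfolding P_def by linarith
  have "(\<zeta> + \<eta>)^2 - (\<zeta> + \<eta>) + t = (2*\<zeta> - 1) * \<eta> + \<eta>^2"
    using root by (simp add: power2_eq_square algebra_simps)
  then show ?thesis
    using approx[OF \<zeta>(1)] approx[OF \<zeta>(2)] root \<open>\<eta> \<ge> 0\<close>
      truncated_series_lipschitz[OF bnd \<zeta>(2,1) \<open>\<rho> < 1\<close>]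
    by (intro approximate_sqrt_slope_bound[where P=P]) (auto simp: P_def)
qed

lemma convolution_sqrt_coeffs_exceed:
  fixes r M :: real
  assumes "0 < r" "r < 1/4" "0 \<le> M"
  obtains N where "\<And>t a. cmod (t - 1/4) = r \<Longrightarrow> (\<And>m. (\<Sum>i\<le>m. a i * a (m-i)) = quad_coeff t m)
    \<Longrightarrow> \<exists>n\<le>N. cmod (a n) > M"
proof -
  define s where "s = sqrt r"
  have s: "0 < s" "s < 1/2"
    using assms real_sqrt_less_iff[of r "1/4"] by (auto simp: s_def real_sqrt_divide)
  define \<delta> where "\<delta> = (1/2 - s) / 2"
  define \<rho> where "\<rho> = 1/2 + s + \<delta>"
  have \<rho>: "0 \<le> \<rho>" "\<rho> < 1" using s unfolding \<rho>_def \<delta>_def by (auto simp: field_simps)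
  define C where "C = 2*(M / (1 - \<rho>)^2)^2 + 1"
  have C: "C > 0" by (simp add: C_def add_nonneg_pos)
  define \<eta> where "\<eta> = min \<delta> (s / C)"
  have "\<eta> \<le> s / C" by (simp add: \<eta>_def)
  then have "C * \<eta> \<le> s" using C by (simp add: pos_le_divide_eq mult.commute)
  moreover have "0 < \<eta>" using s C by (simp add: \<eta>_def \<delta>_def)
  moreover have "\<eta> \<le> \<delta>" unfolding \<eta>_def by (rule min.cobounded1)
  ultimately have \<eta>: "C * \<eta> \<le> s" "0 < \<eta>" "\<eta> \<le> \<delta>" by simp_all
  define \<epsilon> where "\<epsilon> = s * \<eta> / 3"
  have "\<epsilon> > 0" using s \<eta> by (simp add: \<epsilon>_def)
  then have "\<forall>\<^sub>F N in sequentially. N \<ge> 2 \<and> (real N + 1)^2 * M^2 * \<rho>^(N+1) < \<epsilon>"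
    using tendsto_square_times_power_zero[OF \<rho>, THEN tendsto_mult_left[where c="M^2"]]
    by (intro eventually_conj eventually_ge_at_top) (auto dest: order_tendstoD(2) simp: mult_ac)
  then obtain N where "N \<ge> 2" and tail: "(real N + 1)^2 * M^2 * \<rho>^(N+1) < \<epsilon>"
    by (auto simp: eventually_sequentially)
  show ?thesis
  proof (rule that[of N], rule ccontr)
    fix t a assume t: "cmod (t - 1/4) = r"
      and conv: "\<And>m. (\<Sum>i\<le>m. a i * a (m-i)) = quad_coeff t m"
      and "\<not> (\<exists>n\<le>N. cmod (a n) > M)"
    then have bnd: "\<And>n. n \<le> N \<Longrightarrow> cmod (a n) \<le> M" by (auto simp: not_less)
    obtain \<zeta> where root: "\<zeta>^2 - \<zeta> + t = 0" and d: "cmod (2*\<zeta> - 1) = 2 * s"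
      using quadratic_root_near_half[of t] t by (auto simp: s_def)
    have "cmod \<zeta> \<le> 1/2 + s"
      using norm_triangle_ineq[of "1/2" "(2*\<zeta> - 1)/2"] d by (simp add: field_simps)
    then have "cmod \<zeta> + \<eta> \<le> \<rho>" using \<eta> by (simp add: \<rho>_def)
    then have "2 * s * \<eta> < 3*\<epsilon> + C * \<eta>^2"
      using truncated_sqrt_slope_bound[OF conv \<open>N \<ge> 2\<close> bnd tail root] \<eta> \<rho> d
      by (simp add: C_def)
    moreover have "C * \<eta>^2 \<le> s * \<eta>"
      using \<eta> by (simp add: power2_eq_square mult_right_mono)
    ultimately show False by (simp add: \<epsilon>_def mult.commute)
  qed
qed

section \<open>Taylor coefficients of \<open>sqrt (z\<^sup>2 - z + t)\<close>\<close>

lemma higher_deriv_quadratic_at_0: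
  "(deriv ^^ m) (\<lambda>w::complex. w^2 - w + t) 0 = fact m * quad_coeff t m"
proof -
  have d1: "deriv (\<lambda>w::complex. w^2 - w + t) = (\<lambda>w. 2*w - 1)"
    by (rule ext, rule DERIV_imp_deriv) (auto intro!: derivative_eq_intros)
  have d2: "deriv (\<lambda>w::complex. 2*w - 1) = (\<lambda>w. 2)"
    by (rule ext, rule DERIV_imp_deriv) (auto intro!: derivative_eq_intros)
  have d2': "(deriv ^^ 2) g = deriv (deriv g)" for g :: "complex \<Rightarrow> complex"
    by (simp add: numeral_2_eq_2)
  have "m = 0 \<or> m = 1 \<or> m = 2 \<or> (\<exists>k. m = Suc k + 2)" by presburger
  then show ?thesis
  proof (elim disjE exE)
    fix k assume "m = Suc k + 2"
    then show ?thesis by (simp only: funpow_add o_apply d2' d1 d2) (simp add: quad_coeff_def)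
  qed (simp_all add: quad_coeff_def d1 d2 d2')
qed

lemma taylor_coeff_convolution:
  assumes "Re t > 0"
  shows "(\<Sum>i\<le>m. taylor_coeff i t * taylor_coeff (m-i) t) = quad_coeff t m"
proof -
  have f: "sqrt_quad t analytic_on {0}"
    unfolding sqrt_quad_def[abs_def] using assms
    by (intro analytic_intros) (auto simp: complex_nonpos_Reals_iff)
  have "(\<lambda>w. sqrt_quad t w * sqrt_quad t w) = (\<lambda>w. w^2 - w + t)"
    by (simp add: sqrt_quad_def flip: power2_eq_square)
  then have "fact m * quad_coeff t m = (deriv ^^ m) (\<lambda>w. sqrt_quad t w * sqrt_quad t w) 0"
    by (simp add: higher_deriv_quadratic_at_0)
  also have "\<dots> = (\<Sum>i=0..m. of_nat (m choose i) * (deriv ^^ i) (sqrt_quad t) 0 * (deriv ^^ (m-i)) (sqrt_quad t) 0)"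
    by (rule higher_deriv_mult_at[OF f f])
  also have "\<dots> = fact m * (\<Sum>i\<le>m. taylor_coeff i t * taylor_coeff (m-i) t)"
    by (auto simp: atLeast0AtMost taylor_coeff_def binomial_fact sum_distrib_left intro!: sum.cong)
  finally show ?thesis by simp
qed

theorem lemma5p7:
  fixes r M :: real
  assumes "0 < r" and "r < 1/4" and "M > 0"
  shows "\<exists>N::nat. \<forall>t::complex. cmod (t - 1/4) = r \<longrightarrow>
           (\<exists>n. 1 \<le> n \<and> n \<le> N \<and> cmod (taylor_coeff n t) > M)"
proof -
  have "0 \<le> max M 1" by simp
  then obtain N where N: "\<And>t a. cmod (t - 1/4) = r \<Longrightarrow> (\<And>m. (\<Sum>i\<le>m. a i * a (m-i)) = quad_coeff t m)
      \<Longrightarrow> \<exists>n\<le>N. cmod (a n) > max M 1"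
    using convolution_sqrt_coeffs_exceed[OF assms(1,2)] by blast
  have "\<exists>n. 1 \<le> n \<and> n \<le> N \<and> cmod (taylor_coeff n t) > M" if t: "cmod (t - 1/4) = r" for t
  proof -
    have "Re t > 0"
      using abs_Re_le_cmod[of "t - 1/4"] t assms by (simp add: abs_le_iff)
    then obtain n where "n \<le> N" and big: "cmod (taylor_coeff n t) > max M 1"
      using N[OF t, of "\<lambda>n. taylor_coeff n t"] taylor_coeff_convolution by blast
    moreover have "cmod (taylor_coeff 0 t) \<le> 1"
      using norm_triangle_ineq[of "t - 1/4" "1/4"] t assms
      by (simp add: taylor_coeff_def sqrt_quad_def real_sqrt_le_1_iff)
    ultimately show ?thesis by (cases n) auto
  qed
  then show ?thesis by blast
qed

end
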